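(* Let $R$ be a commutative Noetherian ring of prime characteristic $p$ and $G$ an $x$-torsion-free left $R[x,f]$-module. Let $\mathfrak{p}$ be a maximal member of $\mathcal{I}(G)\setminus\{R\}$ with respect to inclusion, and let $L=\operatorname{ann}_G(\bigoplus_{n\ge0}\mathfrak{p}x^n)$ be the corresponding special annihilator submodule of $G$ (a minimal non-zero special annihilator submodule). Then $\mathfrak{p}$ is prime, and every non-zero $g\in L$ satisfies $\operatorname{grann}_{R[x,f]}R[x,f]g=\mathfrak{p}R[x,f]$.
   Context: $R[x,f]$ is the Frobenius skew polynomial ring: free left $R$-module on $(x^i)_{i\ge0}$, $xr=r^px$; $\mathfrak{p}R[x,f]=\bigoplus_n\mathfrak{p}x^n$. $x$-torsion-free: $xg=0\Rightarrow g=0$. $\operatorname{ann}_G\mathfrak{B}$ is the set of elements of $G$ killed by $\mathfrak{B}$; special annihilator submodules are of this form for graded two-sided ideals $\mathfrak{B}$. $\operatorname{grann}N$ is the set of $\sum r_ix^i$ with each $r_ix^i$ annihilating $N$. $\mathcal{I}(G)$ is the set of ideals $\mathfrak{b}$ with $\operatorname{grann}N=\bigoplus_n\mathfrak{b}x^n$ for some $R[x,f]$-submodule $N$ of $G$. *)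

theory Defs
  imports Main "HOL.Modules" "HOL-Computational_Algebra.Primes"
begin

definition is_ideal :: "'r::comm_ring_1 set \<Rightarrow> bool" where
  "is_ideal I \<longleftrightarrow> 0 \<in> I \<and> (\<forall>a\<in>I. \<forall>b\<in>I. a + b \<in> I) \<and> (\<forall>r. \<forall>a\<in>I. r * a \<in> I)"

definition is_prime_ideal :: "'r::comm_ring_1 set \<Rightarrow> bool" where
  "is_prime_ideal P \<longleftrightarrow> is_ideal P \<and> P \<noteq> UNIV \<and> (\<forall>a b. a * b \<in> P \<longrightarrow> a \<in> P \<or> b \<in> P)"

definition noetherian_ring :: "'r::comm_ring_1 itself \<Rightarrow> bool" where
  "noetherian_ring _ \<longleftrightarrow> (\<forall>I :: nat \<Rightarrow> 'r set. (\<forall>n. is_ideal (I n)) \<and> mono I \<longrightarrow> (\<exists>m. \<forall>n\<ge>m. I n = I m))"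

text \<open>An element of R[x,f] = sum of r_i x^i is represented by its coefficient
  sequence with finite support.\<close>
definition skew_polys :: "(nat \<Rightarrow> 'r::comm_ring_1) set" where
  "skew_polys = {\<phi>. finite {n. \<phi> n \<noteq> 0}}"

definition skew_mono :: "'r::comm_ring_1 \<Rightarrow> nat \<Rightarrow> nat \<Rightarrow> 'r" where
  "skew_mono r n = (\<lambda>i. if i = n then r else 0)"

text \<open>A left R[x,f]-module is an R-module G (scalar multiplication s) together with
  an additive map xm (action of x) satisfying x (r g) = r^p (x g).\<close>
definition frob_module :: "nat \<Rightarrow> ('r::comm_ring_1 \<Rightarrow> 'g::ab_group_add \<Rightarrow> 'g) \<Rightarrow> ('g \<Rightarrow> 'g) \<Rightarrow> bool" where
  "frob_module p s xm \<longleftrightarrow> module s \<and> (\<forall>a b. xm (a + b) = xm a + xm b)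
     \<and> (\<forall>r g. xm (s r g) = s (r ^ p) (xm g))"

definition skew_act :: "('r::comm_ring_1 \<Rightarrow> 'g::ab_group_add \<Rightarrow> 'g) \<Rightarrow> ('g \<Rightarrow> 'g) \<Rightarrow> (nat \<Rightarrow> 'r) \<Rightarrow> 'g \<Rightarrow> 'g" where
  "skew_act s xm \<phi> g = (\<Sum>n\<in>{n. \<phi> n \<noteq> 0}. s (\<phi> n) ((xm ^^ n) g))"

definition x_torsion_free :: "('g::ab_group_add \<Rightarrow> 'g) \<Rightarrow> bool" where
  "x_torsion_free xm \<longleftrightarrow> (\<forall>g. xm g = 0 \<longrightarrow> g = 0)"

definition skew_submodule :: "('r::comm_ring_1 \<Rightarrow> 'g::ab_group_add \<Rightarrow> 'g) \<Rightarrow> ('g \<Rightarrow> 'g) \<Rightarrow> 'g set \<Rightarrow> bool" where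
  "skew_submodule s xm N \<longleftrightarrow> 0 \<in> N \<and> (\<forall>a\<in>N. \<forall>b\<in>N. a + b \<in> N)
     \<and> (\<forall>r. \<forall>a\<in>N. s r a \<in> N) \<and> (\<forall>a\<in>N. xm a \<in> N)"

definition skew_cyclic :: "('r::comm_ring_1 \<Rightarrow> 'g::ab_group_add \<Rightarrow> 'g) \<Rightarrow> ('g \<Rightarrow> 'g) \<Rightarrow> 'g \<Rightarrow> 'g set" where
  "skew_cyclic s xm g = {skew_act s xm \<phi> g | \<phi>. \<phi> \<in> skew_polys}"

definition grann :: "('r::comm_ring_1 \<Rightarrow> 'g::ab_group_add \<Rightarrow> 'g) \<Rightarrow> ('g \<Rightarrow> 'g) \<Rightarrow> 'g set \<Rightarrow> (nat \<Rightarrow> 'r) set" where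
  "grann s xm N = {\<phi> \<in> skew_polys. \<forall>i. \<forall>g\<in>N. skew_act s xm (skew_mono (\<phi> i) i) g = 0}"

text \<open>The graded two-sided ideal  (direct sum over n of b x^n) = b R[x,f].\<close>
definition graded_ext :: "'r::comm_ring_1 set \<Rightarrow> (nat \<Rightarrow> 'r) set" where
  "graded_ext b = {\<phi> \<in> skew_polys. \<forall>n. \<phi> n \<in> b}"

definition skew_ann :: "('r::comm_ring_1 \<Rightarrow> 'g::ab_group_add \<Rightarrow> 'g) \<Rightarrow> ('g \<Rightarrow> 'g) \<Rightarrow> (nat \<Rightarrow> 'r) set \<Rightarrow> 'g set" where
  "skew_ann s xm B = {g. \<forall>\<phi>\<in>B. skew_act s xm \<phi> g = 0}"

definition I_set :: "('r::comm_ring_1 \<Rightarrow> 'g::ab_group_add \<Rightarrow> 'g) \<Rightarrow> ('g \<Rightarrow> 'g) \<Rightarrow> 'r set set" where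
  "I_set s xm = {b. is_ideal b \<and> (\<exists>N. skew_submodule s xm N \<and> grann s xm N = graded_ext b)}"

end

theory Submission
  imports Defs
begin

text \<open>Since x^i (r g) = r^(p^i) x^i g, over an x-torsion-free module r x^i kills a
  submodule N exactly when r kills N, so grann N is the graded extension of the
  R-annihilator of N, and I(G) consists of the R-annihilators of submodules. If ab lies in
  the maximal member P = ann N and a does not, then aN is a non-zero submodule whose
  annihilator contains P, hence equals P and contains b. For g \<noteq> 0 killed by P R[x,f],
  the annihilator of the submodule R[x,f]g contains P, hence equals P, and the first
  observation turns this into grann R[x,f]g = P R[x,f].\<close>

lemma skew_mono_in_skew_polys: "skew_mono a i \<in> skew_polys"
proof -
  have "{n. skew_mono a i n \<noteq> 0} \<subseteq> {i}" by (auto simp: skew_mono_def)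
  then show ?thesis by (simp add: skew_polys_def finite_subset)
qed

lemma graded_ext_inj:
  assumes "graded_ext b = graded_ext c" "0 \<in> b" "0 \<in> c"
  shows "b = c"
proof -
  have "skew_mono r 0 \<in> graded_ext b \<longleftrightarrow> r \<in> b" if "0 \<in> b" for r and b :: "'a::comm_ring_1 set"
    using that skew_mono_in_skew_polys[of r 0] by (auto simp: graded_ext_def skew_mono_def)
  then show ?thesis using assms by blast
qed

definition scalar_ann :: "('r::comm_ring_1 \<Rightarrow> 'g::ab_group_add \<Rightarrow> 'g) \<Rightarrow> 'g set \<Rightarrow> 'r set" where
  "scalar_ann s N = {r. \<forall>h\<in>N. s r h = 0}"

text \<open>The product x \<phi> in R[x,f], computed with x r = r^p x.\<close>
definition skew_x_mult :: "nat \<Rightarrow> (nat \<Rightarrow> 'r::comm_ring_1) \<Rightarrow> nat \<Rightarrow> 'r" where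
  "skew_x_mult p \<phi> k = (case k of 0 \<Rightarrow> 0 | Suc n \<Rightarrow> \<phi> n ^ p)"

locale frobenius_module =
  fixes p :: nat and s :: "'r::comm_ring_1 \<Rightarrow> 'g::ab_group_add \<Rightarrow> 'g" and xm :: "'g \<Rightarrow> 'g"
  assumes frob_module: "frob_module p s xm" and p_pos: "0 < p"
begin

sublocale module s
  using frob_module by (simp add: frob_module_def)

sublocale x: additive xm
  using frob_module by unfold_locales (simp add: frob_module_def)

lemma xm_scale: "xm (s r g) = s (r ^ p) (xm g)"
  using frob_module by (simp add: frob_module_def)

lemma funpow_xm_scale: "(xm ^^ n) (s r g) = s (r ^ p ^ n) ((xm ^^ n) g)"
proof (induction n)
  case (Suc n)
  then show ?case
    by (simp add: xm_scale power_mult[symmetric] mult.commute)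
qed simp

lemma skew_act_eq_sum:
  assumes "finite A" "{n. \<phi> n \<noteq> 0} \<subseteq> A"
  shows "skew_act s xm \<phi> g = (\<Sum>n\<in>A. s (\<phi> n) ((xm ^^ n) g))"
  unfolding skew_act_def using assms by (intro sum.mono_neutral_left) auto

lemma skew_act_skew_mono: "skew_act s xm (skew_mono a i) g = s a ((xm ^^ i) g)"
  by (subst skew_act_eq_sum[of "{i}"]) (auto simp: skew_mono_def)

lemma skew_act_add:
  assumes "\<phi> \<in> skew_polys" "\<psi> \<in> skew_polys"
  shows "skew_act s xm (\<lambda>n. \<phi> n + \<psi> n) g = skew_act s xm \<phi> g + skew_act s xm \<psi> g"
proof -
  let ?A = "{n. \<phi> n \<noteq> 0} \<union> {n. \<psi> n \<noteq> 0}"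
  have "finite ?A" using assms by (simp add: skew_polys_def)
  then show ?thesis
    by (subst (1 2 3) skew_act_eq_sum[of ?A]) (auto simp: sum.distrib scale_left_distrib)
qed

lemma skew_act_scale:
  assumes "\<phi> \<in> skew_polys"
  shows "s r (skew_act s xm \<phi> g) = skew_act s xm (\<lambda>n. r * \<phi> n) g"
proof -
  let ?A = "{n. \<phi> n \<noteq> 0}"
  have "finite ?A" using assms by (simp add: skew_polys_def)
  then show ?thesis
    by (subst (1 2) skew_act_eq_sum[of ?A]) (auto simp: scale_sum_right)
qed

lemma skew_x_mult_support: "{k. skew_x_mult p \<phi> k \<noteq> 0} \<subseteq> Suc ` {n. \<phi> n \<noteq> 0}"
proof
  fix k assume "k \<in> {k. skew_x_mult p \<phi> k \<noteq> 0}"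
  then obtain n where "k = Suc n" "\<phi> n ^ p \<noteq> 0"
    by (cases k) (auto simp: skew_x_mult_def)
  moreover from \<open>\<phi> n ^ p \<noteq> 0\<close> have "\<phi> n \<noteq> 0" using p_pos by (metis zero_power)
  ultimately show "k \<in> Suc ` {n. \<phi> n \<noteq> 0}" by blast
qed

lemma xm_skew_act:
  assumes "\<phi> \<in> skew_polys"
  shows "xm (skew_act s xm \<phi> g) = skew_act s xm (skew_x_mult p \<phi>) g"
proof -
  let ?A = "{n. \<phi> n \<noteq> 0}"
  have A: "finite ?A" using assms by (simp add: skew_polys_def)
  have "xm (skew_act s xm \<phi> g) = (\<Sum>n\<in>?A. s (\<phi> n ^ p) ((xm ^^ Suc n) g))"
    by (simp add: skew_act_def x.sum xm_scale)
  also have "\<dots> = (\<Sum>k\<in>Suc ` ?A. s (skew_x_mult p \<phi> k) ((xm ^^ k) g))"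
    by (simp add: sum.reindex skew_x_mult_def)
  also have "\<dots> = skew_act s xm (skew_x_mult p \<phi>) g"
    using A skew_x_mult_support by (intro skew_act_eq_sum[symmetric]) auto
  finally show ?thesis .
qed

lemma skew_cyclic_submodule: "skew_submodule s xm (skew_cyclic s xm g)"
  unfolding skew_submodule_def skew_cyclic_def
proof (intro conjI ballI allI; clarify)
  show "\<exists>\<phi>. 0 = skew_act s xm \<phi> g \<and> \<phi> \<in> skew_polys"
    by (intro exI[of _ "\<lambda>_. 0"]) (simp add: skew_act_def skew_polys_def)
next
  fix \<phi> \<psi> :: "nat \<Rightarrow> 'r" assume "\<phi> \<in> skew_polys" "\<psi> \<in> skew_polys"
  then show "\<exists>\<chi>. skew_act s xm \<phi> g + skew_act s xm \<psi> g = skew_act s xm \<chi> g \<and> \<chi> \<in> skew_polys"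
    by (intro exI[of _ "\<lambda>n. \<phi> n + \<psi> n"]) (auto simp: skew_act_add skew_polys_def
        intro: finite_subset[of _ "{n. \<phi> n \<noteq> 0} \<union> {n. \<psi> n \<noteq> 0}"])
next
  fix r and \<phi> :: "nat \<Rightarrow> 'r" assume "\<phi> \<in> skew_polys"
  then show "\<exists>\<chi>. s r (skew_act s xm \<phi> g) = skew_act s xm \<chi> g \<and> \<chi> \<in> skew_polys"
    by (intro exI[of _ "\<lambda>n. r * \<phi> n"]) (auto simp: skew_act_scale skew_polys_def
        intro: finite_subset[of _ "{n. \<phi> n \<noteq> 0}"])
next
  fix \<phi> :: "nat \<Rightarrow> 'r" assume "\<phi> \<in> skew_polys"
  then show "\<exists>\<chi>. xm (skew_act s xm \<phi> g) = skew_act s xm \<chi> g \<and> \<chi> \<in> skew_polys"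
    using skew_x_mult_support[of \<phi>]
    by (intro exI[of _ "skew_x_mult p \<phi>"]) (auto simp: xm_skew_act skew_polys_def intro: finite_subset)
qed

lemma mem_skew_cyclic: "g \<in> skew_cyclic s xm g"
  unfolding skew_cyclic_def
  by (intro CollectI exI[of _ "skew_mono 1 0"]) (simp add: skew_act_skew_mono skew_mono_in_skew_polys)

lemma is_ideal_scalar_ann: "is_ideal (scalar_ann s N)"
  unfolding is_ideal_def scalar_ann_def
  by (auto simp: scale_left_distrib scale_scale[symmetric] simp del: scale_scale)

lemma scalar_ann_proper:
  assumes "h \<in> N" "h \<noteq> 0"
  shows "scalar_ann s N \<noteq> UNIV"
proof
  assume "scalar_ann s N = UNIV"
  then have "1 \<in> scalar_ann s N" by simp
  then show False using assms by (simp add: scalar_ann_def)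
qed

lemma scale_funpow_xm_eq_0D:
  assumes "x_torsion_free xm" "s a ((xm ^^ i) g) = 0"
  shows "s a g = 0"
proof -
  obtain k where k: "p ^ i = Suc k" using p_pos gr0_conv_Suc by (metis zero_less_power)
  have "(xm ^^ i) (s a g) = s (a ^ k) (s a ((xm ^^ i) g))"
    by (simp add: funpow_xm_scale k mult.commute)
  then have "(xm ^^ i) (s a g) = 0" using assms(2) by simp
  then show ?thesis using assms(1) by (induction i arbitrary: g) (auto simp: x_torsion_free_def)
qed

lemma grann_skew_submodule:
  assumes "x_torsion_free xm" "skew_submodule s xm N"
  shows "grann s xm N = graded_ext (scalar_ann s N)"
proof -
  have funpow_xm_in: "(xm ^^ i) h \<in> N" if "h \<in> N" for i h
    using assms(2) that by (induction i) (auto simp: skew_submodule_def)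
  have "(\<forall>h\<in>N. s a ((xm ^^ i) h) = 0) \<longleftrightarrow> a \<in> scalar_ann s N" for a i
    using funpow_xm_in scale_funpow_xm_eq_0D[OF assms(1)] by (auto simp: scalar_ann_def)
  then show ?thesis
    by (simp add: grann_def graded_ext_def skew_act_skew_mono)
qed

lemma I_set_eq:
  assumes "x_torsion_free xm"
  shows "I_set s xm = {scalar_ann s N | N. skew_submodule s xm N}"
proof (intro set_eqI iffI)
  fix b assume "b \<in> I_set s xm"
  then obtain N where b: "is_ideal b" and N: "skew_submodule s xm N" "grann s xm N = graded_ext b"
    unfolding I_set_def by blast
  have "graded_ext b = graded_ext (scalar_ann s N)"
    using N grann_skew_submodule[OF assms] by simp
  moreover have "0 \<in> b" "0 \<in> scalar_ann s N"
    using b is_ideal_scalar_ann by (auto simp: is_ideal_def)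
  ultimately have "b = scalar_ann s N" by (rule graded_ext_inj)
  with N show "b \<in> {scalar_ann s N | N. skew_submodule s xm N}" by blast
next
  fix b assume "b \<in> {scalar_ann s N | N. skew_submodule s xm N}"
  then obtain N where "skew_submodule s xm N" "b = scalar_ann s N" by blast
  then show "b \<in> I_set s xm"
    unfolding I_set_def using is_ideal_scalar_ann grann_skew_submodule[OF assms] by blast
qed

lemma skew_submodule_scale_image:
  assumes "skew_submodule s xm N"
  shows "skew_submodule s xm (s a ` N)"
proof -
  obtain q where "p = Suc q" using p_pos gr0_conv_Suc by blast
  then have "xm (s a h) = s a (s (a ^ q) (xm h))" for h
    by (simp add: xm_scale mult.commute)
  moreover have "s r (s a h) = s a (s r h)" for r h
    by (rule scale_left_commute)
  ultimately have "xm (s a h) \<in> s a ` N" "s r (s a h) \<in> s a ` N" if "h \<in> N" for r h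
    using assms that unfolding skew_submodule_def by (metis image_eqI)+
  moreover have "s a h + s a h' \<in> s a ` N" if "h \<in> N" "h' \<in> N" for h h'
    using assms that by (auto simp: skew_submodule_def scale_right_distrib[symmetric])
  moreover have "0 \<in> s a ` N"
    using assms image_eqI[of 0 "s a" 0 N] by (simp add: skew_submodule_def)
  ultimately show ?thesis by (auto simp: skew_submodule_def)
qed

lemma is_prime_ideal_maximal_scalar_ann:
  assumes N: "skew_submodule s xm N" and proper: "scalar_ann s N \<noteq> UNIV"
    and maximal: "\<And>M h. skew_submodule s xm M \<Longrightarrow> scalar_ann s N \<subseteq> scalar_ann s M \<Longrightarrow>
      h \<in> M \<Longrightarrow> h \<noteq> 0 \<Longrightarrow> scalar_ann s M = scalar_ann s N"
  shows "is_prime_ideal (scalar_ann s N)"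
  unfolding is_prime_ideal_def
proof (intro conjI allI impI is_ideal_scalar_ann proper)
  fix a b assume ab: "a * b \<in> scalar_ann s N"
  show "a \<in> scalar_ann s N \<or> b \<in> scalar_ann s N"
  proof (cases "a \<in> scalar_ann s N")
    case False
    then obtain h where h: "h \<in> N" "s a h \<noteq> 0" by (auto simp: scalar_ann_def)
    have "s r (s a h') = 0" if "r \<in> scalar_ann s N" "h' \<in> N" for r h'
    proof -
      have "s r (s a h') = s a (s r h')" by (rule scale_left_commute)
      also have "s r h' = 0" using that by (simp add: scalar_ann_def)
      finally show ?thesis by simp
    qed
    then have "scalar_ann s N \<subseteq> scalar_ann s (s a ` N)"
      by (auto simp: scalar_ann_def)
    then have "scalar_ann s (s a ` N) = scalar_ann s N"
      using maximal[OF skew_submodule_scale_image[OF N]] h by blast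
    moreover have "b \<in> scalar_ann s (s a ` N)"
      using ab by (auto simp: scalar_ann_def mult.commute)
    ultimately show ?thesis by simp
  qed simp
qed

lemma grann_skew_cyclic_maximal:
  assumes "x_torsion_free xm" and P: "is_ideal P"
    and g: "g \<in> skew_ann s xm (graded_ext P)" "g \<noteq> 0"
    and maximal: "\<And>M h. skew_submodule s xm M \<Longrightarrow> P \<subseteq> scalar_ann s M \<Longrightarrow>
      h \<in> M \<Longrightarrow> h \<noteq> 0 \<Longrightarrow> scalar_ann s M = P"
  shows "grann s xm (skew_cyclic s xm g) = graded_ext P"
proof -
  have "s r (skew_act s xm \<phi> g) = 0" if "r \<in> P" "\<phi> \<in> skew_polys" for r \<phi>
  proof -
    have "r * \<phi> n \<in> P" for n
      using P that(1) unfolding is_ideal_def by (metis mult.commute)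
    moreover have "{n. r * \<phi> n \<noteq> 0} \<subseteq> {n. \<phi> n \<noteq> 0}" by auto
    ultimately have "(\<lambda>n. r * \<phi> n) \<in> graded_ext P"
      using that(2) by (auto simp: graded_ext_def skew_polys_def intro: finite_subset)
    then show ?thesis
      using g(1) skew_act_scale[OF that(2)] by (simp add: skew_ann_def)
  qed
  then have "P \<subseteq> scalar_ann s (skew_cyclic s xm g)"
    by (auto simp: scalar_ann_def skew_cyclic_def)
  then have "scalar_ann s (skew_cyclic s xm g) = P"
    using maximal[OF skew_cyclic_submodule _ mem_skew_cyclic g(2)] by blast
  then show ?thesis
    using grann_skew_submodule[OF assms(1) skew_cyclic_submodule] by simp
qed

end

text \<open>Noetherianity and the value of the characteristic are not used: they only serve to
  guarantee that maximal members of I(G) exist, and p > 0 suffices below.\<close>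
theorem lemma3p8:
  fixes s :: "'r::comm_ring_1 \<Rightarrow> 'g::ab_group_add \<Rightarrow> 'g"
    and xm :: "'g \<Rightarrow> 'g" and p :: nat and P :: "'r set"
  assumes "noetherian_ring TYPE('r)"
    and "prime p" and "CHAR('r) = p"
    and "frob_module p s xm"
    and "x_torsion_free xm"
    and "P \<in> I_set s xm - {UNIV}"
    and "\<forall>b \<in> I_set s xm - {UNIV}. P \<subseteq> b \<longrightarrow> b = P"
  shows "is_prime_ideal P \<and>
    (\<forall>g \<in> skew_ann s xm (graded_ext P). g \<noteq> 0 \<longrightarrow>
        grann s xm (skew_cyclic s xm g) = graded_ext P)"
proof -
  interpret frobenius_module p s xm
    using assms(2,4) prime_gt_0_nat by unfold_locales
  note I_set_char = I_set_eq[OF assms(5)]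
  obtain N where N: "skew_submodule s xm N" and P: "P = scalar_ann s N"
    using assms(6) unfolding I_set_char by blast
  have maximal: "scalar_ann s M = P"
    if "skew_submodule s xm M" "P \<subseteq> scalar_ann s M" "h \<in> M" "h \<noteq> 0" for M h
    using assms(7) scalar_ann_proper[OF that(3,4)] that(1,2) unfolding I_set_char by blast
  have "is_prime_ideal P"
    using is_prime_ideal_maximal_scalar_ann[OF N] maximal assms(6) unfolding P by blast
  moreover have "grann s xm (skew_cyclic s xm g) = graded_ext P"
    if "g \<in> skew_ann s xm (graded_ext P)" "g \<noteq> 0" for g
    using grann_skew_cyclic_maximal[OF assms(5) _ that] maximal is_ideal_scalar_ann P by blast
  ultimately show ?thesis by blast
qed

end
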